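(* Let $\mathcal{X}$ be a finite set, let $\eta \in [0,1/2]$, $\gamma>0$, and let $p^{(0)}$ be the uniform distribution on $\mathcal{X}$. Let $h^{(1)},\dots,h^{(T)}:\mathcal{X}\to[0,1]$ be functions and define distributions recursively by $p^{(t)}(x) \propto p^{(t-1)}(x)\,(1-\eta h^{(t)}(x))$ (normalized to sum to $1$ over $\mathcal{X}$). Assume that for every $t\in\{1,\dots,T\}$, \[\sum_{x\in\mathcal{X}} h^{(t)}(x)\,p^{(t-1)}(x) \ge \gamma .\] Let $M_T(x) = \sum_{t=1}^T h^{(t)}(x)$. Then for all $x\in\mathcal{X}$, \[\log p^{(T)}(x) \ge \frac{\gamma\eta}{\eta+2}\,T - \eta(\eta+1)\,M_T(x) - \log(2|\mathcal{X}|).\]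
   Context: $M_T(x)$ counts (fractionally) how many times the classifiers $h^{(t)}$ downweight the point $x$. *)

theory Defs
  imports "HOL-Analysis.Analysis"
begin

text \<open>Classifiers are indexed h 1, ..., h T.\<close>

fun mw_dist :: "'a set \<Rightarrow> real \<Rightarrow> (nat \<Rightarrow> 'a \<Rightarrow> real) \<Rightarrow> nat \<Rightarrow> 'a \<Rightarrow> real" where
  "mw_dist X eta h 0 = (\<lambda>x. 1 / real (card X))"
| "mw_dist X eta h (Suc t) =
     (\<lambda>x. mw_dist X eta h t x * (1 - eta * h (Suc t) x) /
          (\<Sum>y\<in>X. mw_dist X eta h t y * (1 - eta * h (Suc t) y)))"

end

theory Submission
  imports Defs
begin

text \<open>Let \<open>Z\<^sub>t\<close> be the normalizer of round \<open>t\<close>. Because the previous weights form a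
  distribution, \<open>Z\<^sub>t = 1 - \<eta> \<cdot> (advantage of h\<^sub>t) \<le> 1 - \<eta>\<gamma>\<close>, hence \<open>ln Z\<^sub>t \<le> -\<eta>\<gamma>\<close>.
  On the other hand \<open>ln (1 - \<eta> h) \<ge> -\<eta> h - \<eta>\<^sup>2 h\<close>, since \<open>\<eta> h \<le> 1/2\<close> and \<open>h\<^sup>2 \<le> h\<close>.
  Telescoping \<open>ln p\<^sub>t(x) = ln p\<^sub>t\<^sub>-\<^sub>1(x) + ln (1 - \<eta> h\<^sub>t(x)) - ln Z\<^sub>t\<close> from the uniform
  start yields \<open>ln p\<^sub>T(x) \<ge> \<eta>\<gamma>T - \<eta>(\<eta>+1) M\<^sub>T(x) - ln |X|\<close>, which is stronger than the
  stated bound.\<close>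

lemma ln_one_minus_ge:
  fixes u :: real
  assumes "0 \<le> u" "u \<le> 1/2"
  shows "- u - u\<^sup>2 \<le> ln (1 - u)"
proof -
  define f where "f v = ln (1 - v) + v + v\<^sup>2" for v :: real
  have "f 0 \<le> f u"
  proof (rule DERIV_nonneg_imp_nondecreasing[OF assms(1)])
    fix v :: real assume v: "0 \<le> v" "v \<le> u"
    then have "1 - v > 0" using assms by simp
    then have "DERIV f v :> v * (1 - 2 * v) / (1 - v)"
      unfolding f_def by (auto intro!: derivative_eq_intros simp: field_simps power2_eq_square)
    moreover have "v * (1 - 2 * v) / (1 - v) \<ge> 0" using v assms by simp
    ultimately show "\<exists>y. DERIV f v :> y \<and> 0 \<le> y" by blast
  qed
  then show ?thesis unfolding f_def by simp
qed

definition mw_update :: "'a set \<Rightarrow> real \<Rightarrow> ('a \<Rightarrow> real) \<Rightarrow> ('a \<Rightarrow> real) \<Rightarrow> 'a \<Rightarrow> real" where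
  "mw_update X eta w p x = p x * (1 - eta * w x) / (\<Sum>y\<in>X. p y * (1 - eta * w y))"

lemma mw_dist_Suc:
  "mw_dist X eta h (Suc t) = mw_update X eta (h (Suc t)) (mw_dist X eta h t)"
  by (rule ext) (simp add: mw_update_def)

context
  fixes X :: "'a set" and eta :: real and w p :: "'a \<Rightarrow> real"
  assumes p_pos: "\<And>x. x \<in> X \<Longrightarrow> 0 < p x" and sum_p: "sum p X = 1"
    and w_bounds: "\<And>x. x \<in> X \<Longrightarrow> 0 \<le> w x \<and> w x \<le> 1"
    and eta_nonneg: "0 \<le> eta" and eta_le_half: "eta \<le> 1/2"
begin

private lemma eta_w_le_half: "x \<in> X \<Longrightarrow> eta * w x \<le> 1/2"
  using mult_left_le[of "w x" eta] w_bounds eta_nonneg eta_le_half by fastforce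

lemma mw_normalizer_eq:
  "(\<Sum>y\<in>X. p y * (1 - eta * w y)) = 1 - eta * (\<Sum>y\<in>X. w y * p y)"
  using sum_p by (simp add: algebra_simps sum_subtractf sum_distrib_left)

lemma mw_normalizer_ge_half: "(\<Sum>y\<in>X. p y * (1 - eta * w y)) \<ge> 1/2"
proof -
  have "(\<Sum>y\<in>X. w y * p y) \<le> (\<Sum>y\<in>X. p y)"
    using w_bounds p_pos by (intro sum_mono) (simp add: mult_left_le_one_le less_imp_le)
  then have "eta * (\<Sum>y\<in>X. w y * p y) \<le> eta"
    using sum_p eta_nonneg mult_left_mono[of _ 1 eta] by simp
  then show ?thesis using mw_normalizer_eq eta_le_half by linarith
qed

lemma ln_mw_normalizer_le:
  "ln (\<Sum>y\<in>X. p y * (1 - eta * w y)) \<le> - eta * (\<Sum>y\<in>X. w y * p y)"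
  using ln_le_minus_one[of "\<Sum>y\<in>X. p y * (1 - eta * w y)"] mw_normalizer_ge_half mw_normalizer_eq
  by simp

lemma mw_update_pos: "x \<in> X \<Longrightarrow> 0 < mw_update X eta w p x"
  using p_pos eta_w_le_half mw_normalizer_ge_half unfolding mw_update_def
  by (intro divide_pos_pos mult_pos_pos) fastforce+

lemma sum_mw_update: "sum (mw_update X eta w p) X = 1"
  using mw_normalizer_ge_half unfolding mw_update_def
  by (simp add: sum_divide_distrib[symmetric])

lemma ln_mw_update_ge:
  assumes x: "x \<in> X"
  shows "ln (p x) + eta * (\<Sum>y\<in>X. w y * p y) - eta * (eta + 1) * w x
           \<le> ln (mw_update X eta w p x)"
proof -
  define u where "u = eta * w x"
  have u: "0 \<le> u" "u \<le> 1/2"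
    unfolding u_def using w_bounds[OF x] eta_nonneg eta_w_le_half[OF x] by auto
  have "ln (mw_update X eta w p x) = ln (p x) + ln (1 - u) - ln (\<Sum>y\<in>X. p y * (1 - eta * w y))"
    using p_pos[OF x] u mw_normalizer_ge_half unfolding mw_update_def u_def
    by (simp add: ln_div ln_mult)
  moreover have "u\<^sup>2 \<le> eta\<^sup>2 * w x"
    using w_bounds[OF x] unfolding u_def power_mult_distrib
    by (intro mult_left_mono) (auto simp: power2_eq_square mult_left_le_one_le)
  ultimately show ?thesis
    using ln_one_minus_ge[OF u] ln_mw_normalizer_le unfolding u_def
    by (simp add: algebra_simps power2_eq_square)
qed

end

context
  fixes X :: "'a set" and eta :: real and h :: "nat \<Rightarrow> 'a \<Rightarrow> real" and T :: nat
  assumes finite_X: "finite X" and X_ne: "X \<noteq> {}"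
    and eta_nonneg: "0 \<le> eta" and eta_le_half: "eta \<le> 1/2"
    and h_bounds: "\<And>t x. t \<in> {1..T} \<Longrightarrow> x \<in> X \<Longrightarrow> 0 \<le> h t x \<and> h t x \<le> 1"
begin

lemma mw_dist_distribution:
  "t \<le> T \<Longrightarrow> (\<forall>x\<in>X. 0 < mw_dist X eta h t x) \<and> sum (mw_dist X eta h t) X = 1"
proof (induction t)
  case 0
  then show ?case using finite_X X_ne by (simp add: card_gt_0_iff)
next
  case (Suc t)
  then have p_pos: "\<And>x. x \<in> X \<Longrightarrow> 0 < mw_dist X eta h t x"
    and sum_p: "sum (mw_dist X eta h t) X = 1"
    by simp_all
  from Suc.prems have w: "\<And>x. x \<in> X \<Longrightarrow> 0 \<le> h (Suc t) x \<and> h (Suc t) x \<le> 1"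
    using h_bounds by simp
  note step = p_pos sum_p w eta_nonneg eta_le_half
  show ?case
    unfolding mw_dist_Suc
    using mw_update_pos[where p = "mw_dist X eta h t" and w = "h (Suc t)", OF step]
      sum_mw_update[where p = "mw_dist X eta h t" and w = "h (Suc t)", OF step]
    by blast
qed

lemma ln_mw_dist_ge:
  assumes "t \<le> T" and x: "x \<in> X"
  shows "eta * (\<Sum>s=1..t. \<Sum>y\<in>X. h s y * mw_dist X eta h (s - 1) y)
           - eta * (eta + 1) * (\<Sum>s=1..t. h s x) - ln (real (card X))
         \<le> ln (mw_dist X eta h t x)"
  using assms(1)
proof (induction t)
  case 0
  then show ?case using finite_X X_ne by (simp add: ln_div)
next
  case (Suc t)
  then have "Suc t \<in> {1..T}" by simp
  with Suc.prems have "ln (mw_dist X eta h t x) + eta * (\<Sum>y\<in>X. h (Suc t) y * mw_dist X eta h t y)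
      - eta * (eta + 1) * h (Suc t) x \<le> ln (mw_dist X eta h (Suc t) x)"
    unfolding mw_dist_Suc using mw_dist_distribution h_bounds eta_nonneg eta_le_half x
    by (intro ln_mw_update_ge) auto
  with Suc show ?case by (simp add: algebra_simps)
qed

end

theorem theorem1:
  fixes X :: "'a set" and eta gamma :: real and h :: "nat \<Rightarrow> 'a \<Rightarrow> real" and T :: nat
  assumes "finite X" and "X \<noteq> {}"
    and "0 \<le> eta" and "eta \<le> 1/2" and "gamma > 0"
    and "\<And>t x. t \<in> {1..T} \<Longrightarrow> x \<in> X \<Longrightarrow> 0 \<le> h t x \<and> h t x \<le> 1"
    and "\<And>t. t \<in> {1..T} \<Longrightarrow> (\<Sum>x\<in>X. h t x * mw_dist X eta h (t - 1) x) \<ge> gamma"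
  shows "\<forall>x\<in>X. ln (mw_dist X eta h T x)
           \<ge> gamma * eta / (eta + 2) * real T - eta * (eta + 1) * (\<Sum>t=1..T. h t x)
             - ln (2 * real (card X))"
proof
  fix x assume x: "x \<in> X"
  have "gamma * real T \<le> (\<Sum>s=1..T. \<Sum>y\<in>X. h s y * mw_dist X eta h (s - 1) y)"
  proof -
    have "(\<Sum>s=1..T. gamma) \<le> (\<Sum>s=1..T. \<Sum>y\<in>X. h s y * mw_dist X eta h (s - 1) y)"
      by (rule sum_mono) (rule assms(7))
    then show ?thesis by (simp add: mult.commute)
  qed
  then have "eta * (gamma * real T)
      \<le> eta * (\<Sum>s=1..T. \<Sum>y\<in>X. h s y * mw_dist X eta h (s - 1) y)"
    using assms(3) by (rule mult_left_mono)
  moreover have "gamma * eta / (eta + 2) * real T \<le> eta * (gamma * real T)"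
  proof -
    have "gamma * eta / (eta + 2) \<le> eta * gamma"
      using assms(3,5) by (simp add: divide_le_eq algebra_simps)
    from mult_right_mono[OF this, of "real T"] show ?thesis by (simp add: mult.assoc)
  qed
  moreover have "ln (real (card X)) \<le> ln (2 * real (card X))"
    using assms(1,2) by (simp add: card_gt_0_iff)
  ultimately show "ln (mw_dist X eta h T x) \<ge> gamma * eta / (eta + 2) * real T
      - eta * (eta + 1) * (\<Sum>t=1..T. h t x) - ln (2 * real (card X))"
    using ln_mw_dist_ge[where h = h and T = T, OF assms(1-4,6) order.refl x] by linarith
qed

end
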